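(* Let $\sigma$ be a $C_0$-nice measure on $\mathbb{C}$ with $0\notin\operatorname{supp}(\sigma)$, let $z\notin\operatorname{supp}(\sigma)$ and set $d_0=\operatorname{dist}(\{0,z\},\operatorname{supp}(\sigma))$. Then $$\int_{\mathbb{C}}\Big|\frac{1}{z-\xi}+\frac1\xi\Big|\,d\sigma(\xi)\le\frac{C(C_0)|z|}{d_0},$$ where $C(C_0)$ depends only on $C_0$.
   Context: $\sigma$ is a positive Borel measure; it is $C_0$-nice if $\sigma(B(w,r))\le C_0r$ for every open disc $B(w,r)$. *)

theory Defs
  imports "HOL-Analysis.Analysis"
begin

definition nice_measure :: "real \<Rightarrow> complex measure \<Rightarrow> bool" where
  "nice_measure C0 \<sigma> \<longleftrightarrow> sets \<sigma> = sets borel \<and>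
     (\<forall>w r. r > 0 \<longrightarrow> emeasure \<sigma> (ball w r) \<le> ennreal (C0 * r))"

definition measure_supp :: "complex measure \<Rightarrow> complex set" where
  "measure_supp \<sigma> = {x. \<forall>r>0. emeasure \<sigma> (ball x r) > 0}"

end

theory Submission
  imports Defs
begin

(* Since |1/(z - xi) + 1/xi| = |z| / (|xi - z| |xi|) <= |z|/2 (|xi - z|^-2 + |xi|^-2), it suffices
   to bound the integral of |xi - w|^-2 for w in {0, z}.  No mass lies within distance d0 of w,
   and the dyadic shell d0 2^k <= |xi - w| < d0 2^(k+1) has mass at most C0 d0 2^(k+1) while the
   integrand is at most 4^-k / d0^2 on it; summing the geometric series gives 4 C0 / d0,
   so C(C0) = 4 |C0| works. *)

lemma notin_measure_supp_iff:
  "x \<notin> measure_supp \<sigma> \<longleftrightarrow> (\<exists>r>0. emeasure \<sigma> (ball x r) = 0)"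
  by (auto simp: measure_supp_def)

lemma emeasure_disjoint_measure_supp:
  fixes \<sigma> :: "complex measure"
  assumes sets: "sets \<sigma> = sets borel" and U: "U \<in> sets borel"
    and disj: "U \<inter> measure_supp \<sigma> = {}"
  shows "emeasure \<sigma> U = 0"
proof -
  define F where "F = {ball x r |x r. r > 0 \<and> emeasure \<sigma> (ball x r) = 0}"
  obtain F' where F': "F' \<subseteq> F" "countable F'" "\<Union>F' = \<Union>F"
    using Lindelof[of F] unfolding F_def by blast
  have "(\<Union>S\<in>F'. S) \<in> null_sets \<sigma>"
    using F'(1) sets by (intro null_sets_UN' F'(2)) (auto simp: F_def null_sets_def)
  then have null: "\<Union>F \<in> null_sets \<sigma>"
    using F'(3) by simp
  have cover: "U \<subseteq> \<Union>F"
  proof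
    fix x assume "x \<in> U"
    then obtain r where "r > 0" "emeasure \<sigma> (ball x r) = 0"
      using disj notin_measure_supp_iff[of x \<sigma>] by blast
    then show "x \<in> \<Union>F" unfolding F_def using centre_in_ball by blast
  qed
  show ?thesis
    by (rule emeasure_eq_0[OF null_setsD2[OF null] null_setsD1[OF null] cover])
qed

lemma closed_measure_supp:
  fixes \<sigma> :: "complex measure"
  assumes sets: "sets \<sigma> = sets borel"
  shows "closed (measure_supp \<sigma>)"
  unfolding closed_def open_contains_ball
proof
  fix x assume "x \<in> - measure_supp \<sigma>"
  then obtain r where r: "r > 0" "emeasure \<sigma> (ball x r) = 0"
    using notin_measure_supp_iff[of x \<sigma>] by blast
  have "ball x r \<subseteq> - measure_supp \<sigma>"
  proof
    fix y assume y: "y \<in> ball x r"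
    have sub: "ball y (r - dist x y) \<subseteq> ball x r"
      by (rule ball_subset_ball_iff[THEN iffD2, OF disjI1]) (simp add: dist_commute)
    have "emeasure \<sigma> (ball y (r - dist x y)) = 0"
      by (rule emeasure_eq_0[OF _ r(2) sub]) (simp add: sets)
    moreover have "r - dist x y > 0"
      using y by simp
    ultimately show "y \<in> - measure_supp \<sigma>"
      using notin_measure_supp_iff[of y \<sigma>] by blast
  qed
  then show "\<exists>e>0. ball x e \<subseteq> - measure_supp \<sigma>" using r(1) by blast
qed

lemma emeasure_space_eq_0_if_measure_supp_empty:
  fixes \<sigma> :: "complex measure"
  assumes sets: "sets \<sigma> = sets borel" and "measure_supp \<sigma> = {}"
  shows "emeasure \<sigma> (space \<sigma>) = 0"
  using emeasure_disjoint_measure_supp[OF sets] sets_eq_imp_space_eq[OF sets] assms(2) by simp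

lemma emeasure_ball_setdist_measure_supp:
  fixes \<sigma> :: "complex measure"
  assumes sets: "sets \<sigma> = sets borel" and "w \<in> A"
  shows "emeasure \<sigma> (ball w (setdist A (measure_supp \<sigma>))) = 0"
proof (rule emeasure_disjoint_measure_supp[OF sets])
  show "ball w (setdist A (measure_supp \<sigma>)) \<inter> measure_supp \<sigma> = {}"
    using setdist_le_dist[OF \<open>w \<in> A\<close>, of _ "measure_supp \<sigma>"] by fastforce
qed simp

lemma setdist_measure_supp_pos:
  fixes \<sigma> :: "complex measure"
  assumes sets: "sets \<sigma> = sets borel" and "compact A" "A \<noteq> {}" "measure_supp \<sigma> \<noteq> {}"
    and "A \<inter> measure_supp \<sigma> = {}"
  shows "0 < setdist A (measure_supp \<sigma>)"
proof -
  have "setdist A (measure_supp \<sigma>) \<noteq> 0"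
    using setdist_eq_0_compact_closed[OF \<open>compact A\<close> closed_measure_supp[OF sets]] assms(3-)
    by auto
  then show ?thesis
    using setdist_pos_le[of A "measure_supp \<sigma>"] by linarith
qed

lemma nice_measure_abs: "nice_measure C0 \<sigma> \<Longrightarrow> nice_measure \<bar>C0\<bar> \<sigma>"
  unfolding nice_measure_def
  by (metis abs_ge_self dual_order.trans ennreal_leI less_eq_real_def mult_right_mono)

lemma exists_dyadic_shell:
  fixes d r :: real
  assumes "0 < d" "d \<le> r"
  shows "\<exists>k. d * 2 ^ k \<le> r \<and> r < d * 2 ^ Suc k"
proof -
  have "\<exists>n. r < d * 2 ^ n"
    using real_arch_pow[of 2 "r / d"] assms by (auto simp: field_simps)
  define m where "m = (LEAST n. r < d * 2 ^ n)"
  have m: "r < d * 2 ^ m"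
    unfolding m_def by (rule LeastI_ex) fact
  have "m \<noteq> 0" using m assms by (cases m) auto
  then obtain k where k: "m = Suc k" using not0_implies_Suc by blast
  have "\<not> r < d * 2 ^ k"
    using not_less_Least[of k "\<lambda>n. r < d * 2 ^ n"] k unfolding m_def by simp
  then show ?thesis using m k by (intro exI[of _ k]) auto
qed

lemma inverse_square_le_dyadic_sum:
  fixes w \<xi> :: "'a::metric_space"
  assumes d: "0 < d" "d \<le> dist \<xi> w"
  shows "ennreal (1 / (dist \<xi> w)\<^sup>2)
           \<le> (\<Sum>j. ennreal ((1/4) ^ j / d\<^sup>2) * indicator (ball w (d * 2 ^ Suc j)) \<xi>)"
proof -
  obtain k where k: "d * 2 ^ k \<le> dist \<xi> w" "dist \<xi> w < d * 2 ^ Suc k"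
    using exists_dyadic_shell[OF d] by blast
  define t where "t j = ennreal ((1/4) ^ j / d\<^sup>2) * indicator (ball w (d * 2 ^ Suc j)) \<xi>" for j
  have "0 < d * 2 ^ k"
    using d(1) by simp
  moreover from this have "0 < dist \<xi> w"
    using k(1) by linarith
  ultimately
  have "1 / (dist \<xi> w)\<^sup>2 \<le> 1 / (d * 2 ^ k)\<^sup>2"
    using k(1) by (intro divide_left_mono power_mono mult_pos_pos) auto
  also have "\<dots> = (1/4) ^ k / d\<^sup>2"
  proof -
    have "(2::real) ^ k * 2 ^ k = 4 ^ k"
      by (simp flip: power_mult_distrib)
    then show ?thesis
      by (simp add: power2_eq_square power_one_over)
  qed
  finally have "ennreal (1 / (dist \<xi> w)\<^sup>2) \<le> t k"
    using k(2) by (simp add: t_def dist_commute ennreal_leI)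
  also have "t k \<le> suminf t"
    using sum_le_suminf[of t "{k}"] by simp
  finally show ?thesis
    unfolding t_def .
qed

lemma nn_integral_inverse_square_le:
  assumes nice: "nice_measure C0 \<sigma>" and "C0 \<ge> 0" "0 < d"
    and hole: "emeasure \<sigma> (ball w d) = 0"
  shows "(\<integral>\<^sup>+ \<xi>. ennreal (1 / (dist \<xi> w)\<^sup>2) \<partial>\<sigma>) \<le> ennreal (4 * C0 / d)"
proof -
  have sets: "sets \<sigma> = sets borel"
    using nice by (simp add: nice_measure_def)
  have balls: "\<And>r. ball w r \<in> sets \<sigma>"
    using sets by simp
  let ?c = "\<lambda>j::nat. (1/4::real) ^ j / d\<^sup>2" and ?B = "\<lambda>j::nat. ball w (d * 2 ^ Suc j)"
  have "AE \<xi> in \<sigma>. \<xi> \<notin> ball w d"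
    using hole balls by (intro AE_not_in) (simp add: null_sets_def)
  then have "AE \<xi> in \<sigma>. ennreal (1 / (dist \<xi> w)\<^sup>2) \<le> (\<Sum>j. ennreal (?c j) * indicator (?B j) \<xi>)"
    by eventually_elim (intro inverse_square_le_dyadic_sum \<open>0 < d\<close>, simp add: dist_commute)
  then have "(\<integral>\<^sup>+ \<xi>. ennreal (1 / (dist \<xi> w)\<^sup>2) \<partial>\<sigma>)
      \<le> (\<integral>\<^sup>+ \<xi>. (\<Sum>j. ennreal (?c j) * indicator (?B j) \<xi>) \<partial>\<sigma>)"
    by (rule nn_integral_mono_AE)
  also have "\<dots> = (\<Sum>j. ennreal (?c j) * emeasure \<sigma> (?B j))"
    using balls by (simp add: nn_integral_suminf nn_integral_cmult_indicator)
  also have "\<dots> \<le> (\<Sum>j. ennreal (2 * C0 / d * (1/2) ^ j))"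
  proof (rule suminf_le)
    fix j
    have "emeasure \<sigma> (?B j) \<le> ennreal (C0 * (d * 2 ^ Suc j))"
      using nice \<open>0 < d\<close> by (simp add: nice_measure_def)
    then have "ennreal (?c j) * emeasure \<sigma> (?B j) \<le> ennreal (?c j) * ennreal (C0 * (d * 2 ^ Suc j))"
      by (rule mult_left_mono) simp
    also have "\<dots> = ennreal (?c j * (C0 * (d * 2 ^ Suc j)))"
      using \<open>C0 \<ge> 0\<close> \<open>0 < d\<close> by (intro ennreal_mult[symmetric]) simp_all
    also have "?c j * (C0 * (d * 2 ^ Suc j)) = 2 * C0 / d * (1/2) ^ j"
    proof -
      have "(1/4::real) ^ j * 2 ^ j = (1/2) ^ j"
        by (simp flip: power_mult_distrib)
      then show ?thesis
        using \<open>0 < d\<close> by (simp add: power2_eq_square field_simps)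
    qed
    finally show "ennreal (?c j) * emeasure \<sigma> (?B j) \<le> ennreal (2 * C0 / d * (1/2) ^ j)" .
  qed auto
  also have "\<dots> = ennreal (4 * C0 / d)"
    using \<open>C0 \<ge> 0\<close> \<open>0 < d\<close> geometric_sums[of "1/2::real"]
    by (intro suminf_ennreal_eq) (auto dest: sums_mult[where c = "2 * C0 / d"])
  finally show ?thesis .
qed

lemma norm_inverse_sum_le:
  fixes z \<xi> :: complex
  assumes "\<xi> \<noteq> 0" "\<xi> \<noteq> z"
  shows "norm (1 / (z - \<xi>) + 1 / \<xi>) \<le> norm z / 2 * (1 / (dist \<xi> z)\<^sup>2 + 1 / (dist \<xi> 0)\<^sup>2)"
proof -
  have "1 / (z - \<xi>) + 1 / \<xi> = z / ((z - \<xi>) * \<xi>)"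
    using assms by (simp add: field_simps)
  then have "norm (1 / (z - \<xi>) + 1 / \<xi>) = norm z * (1 / dist \<xi> z * (1 / dist \<xi> 0))"
    by (simp add: norm_divide norm_mult dist_norm norm_minus_commute)
  also have "\<dots> \<le> norm z * (((1 / dist \<xi> z)\<^sup>2 + (1 / dist \<xi> 0)\<^sup>2) / 2)"
    using sum_squares_bound[of "1 / dist \<xi> z" "1 / dist \<xi> 0"] by (intro mult_left_mono) auto
  finally show ?thesis
    by (simp add: power_one_over)
qed

lemma nn_integral_norm_inverse_sum_le:
  fixes z :: complex
  assumes nice: "nice_measure C0 \<sigma>" and "C0 \<ge> 0" "0 < d"
    and hole0: "emeasure \<sigma> (ball 0 d) = 0" and holez: "emeasure \<sigma> (ball z d) = 0"
  shows "(\<integral>\<^sup>+ \<xi>. ennreal (norm (1 / (z - \<xi>) + 1 / \<xi>)) \<partial>\<sigma>) \<le> ennreal (4 * C0 * norm z / d)"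
proof -
  have sets: "sets \<sigma> = sets borel"
    using nice by (simp add: nice_measure_def)
  let ?I = "\<lambda>w. \<integral>\<^sup>+ \<xi>. ennreal (1 / (dist \<xi> w)\<^sup>2) \<partial>\<sigma>" and ?h = "ennreal (norm z / 2)"
  have meas: "(\<lambda>\<xi>. ennreal (1 / (dist \<xi> w)\<^sup>2)) \<in> borel_measurable \<sigma>" for w
    unfolding measurable_cong_sets[OF sets refl] by measurable
  have "AE \<xi> in \<sigma>. \<xi> \<notin> ball 0 d \<union> ball z d"
    using hole0 holez sets by (intro AE_not_in null_sets.Un) (simp_all add: null_sets_def)
  then have "AE \<xi> in \<sigma>. ennreal (norm (1 / (z - \<xi>) + 1 / \<xi>))
      \<le> ?h * ennreal (1 / (dist \<xi> z)\<^sup>2) + ?h * ennreal (1 / (dist \<xi> 0)\<^sup>2)"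
  proof eventually_elim
    case (elim \<xi>)
    then have "\<xi> \<noteq> 0" "\<xi> \<noteq> z"
      using \<open>0 < d\<close> by auto
    then show ?case
      using norm_inverse_sum_le
      by (simp add: ennreal_leI distrib_left flip: ennreal_mult ennreal_plus)
  qed
  then have "(\<integral>\<^sup>+ \<xi>. ennreal (norm (1 / (z - \<xi>) + 1 / \<xi>)) \<partial>\<sigma>)
      \<le> (\<integral>\<^sup>+ \<xi>. ?h * ennreal (1 / (dist \<xi> z)\<^sup>2) + ?h * ennreal (1 / (dist \<xi> 0)\<^sup>2) \<partial>\<sigma>)"
    by (rule nn_integral_mono_AE)
  also have "\<dots> = ?h * ?I z + ?h * ?I 0"
    using meas[of z] meas[of 0] by (simp add: nn_integral_add nn_integral_cmult)
  also have "\<dots> \<le> ?h * ennreal (4 * C0 / d) + ?h * ennreal (4 * C0 / d)"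
    using nn_integral_inverse_square_le[OF nice \<open>C0 \<ge> 0\<close> \<open>0 < d\<close> hole0]
      nn_integral_inverse_square_le[OF nice \<open>C0 \<ge> 0\<close> \<open>0 < d\<close> holez]
    by (intro add_mono mult_left_mono) auto
  also have "\<dots> = ennreal (4 * C0 * norm z / d)"
    using \<open>C0 \<ge> 0\<close> \<open>0 < d\<close> by (simp add: field_simps flip: ennreal_mult ennreal_plus)
  finally show ?thesis .
qed

theorem mainTheorem7:
  fixes C0 :: real
  shows "\<exists>C::real. \<forall>(\<sigma>::complex measure) (z::complex).
           nice_measure C0 \<sigma> \<longrightarrow> 0 \<notin> measure_supp \<sigma> \<longrightarrow> z \<notin> measure_supp \<sigma> \<longrightarrow>
           (\<integral>\<^sup>+ \<xi>. ennreal (norm (1 / (z - \<xi>) + 1 / \<xi>)) \<partial>\<sigma>)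
             \<le> ennreal (C * norm z / setdist {0, z} (measure_supp \<sigma>))"
proof (intro exI[of _ "4 * \<bar>C0\<bar>"] allI impI)
  fix \<sigma> :: "complex measure" and z :: complex
  assume nice: "nice_measure C0 \<sigma>" and "0 \<notin> measure_supp \<sigma>" "z \<notin> measure_supp \<sigma>"
  have sets: "sets \<sigma> = sets borel"
    using nice by (simp add: nice_measure_def)
  let ?S = "measure_supp \<sigma>" and ?f = "\<lambda>\<xi>. ennreal (norm (1 / (z - \<xi>) + 1 / \<xi>))"
  show "integral\<^sup>N \<sigma> ?f \<le> ennreal (4 * \<bar>C0\<bar> * norm z / setdist {0, z} ?S)"
  proof (cases "?S = {}")
    case True
    then have "AE \<xi> in \<sigma>. ?f \<xi> = 0"
      by (intro emeasure_0_AE emeasure_space_eq_0_if_measure_supp_empty[OF sets])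
    then have "integral\<^sup>N \<sigma> ?f = integral\<^sup>N \<sigma> (\<lambda>_. 0)"
      by (rule nn_integral_cong_AE)
    then show ?thesis
      by simp
  next
    case False
    then have "0 < setdist {0, z} ?S"
      using \<open>0 \<notin> ?S\<close> \<open>z \<notin> ?S\<close> by (intro setdist_measure_supp_pos[OF sets]) auto
    then show ?thesis
      using nn_integral_norm_inverse_sum_le[OF nice_measure_abs[OF nice] abs_ge_zero]
        emeasure_ball_setdist_measure_supp[OF sets]
      by simp
  qed
qed

end
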